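(* For any time warp $f$ and $m\in\omega^+$, $f^\star(m)=\bigwedge\{p(n)\mid n\in\omega^+\text{ and } m\le f(n)\}$ (where the meet of the empty set is $\omega$).
   Context: Let $\omega^+=\omega\cup\{\omega\}$ with its natural order. A time warp is a join-preserving map $f\colon\omega^+\to\omega^+$ (equivalently order-preserving with $f(0)=0$ and $f(\omega)=\bigvee_{n\in\omega}f(n)$); time warps are ordered pointwise. $p$ is the time warp $p(m)=\bigvee\{k\in\omega\mid k<m\}$ (so $p(0)=0$, $p(\omega)=\omega$, $p(m)=m-1$ otherwise), and $f^\star$ is the largest time warp $h$ with $f\circ h\le p$. *)

theory Defs
  imports Main "HOL-Library.Extended_Nat"
begin

text \<open>omega^+ is modelled by enat (enat n for n in omega, and \<infinity> for omega).
  A time warp is a join-preserving (all joins, including the empty one) map.\<close>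

definition time_warp :: "(enat \<Rightarrow> enat) \<Rightarrow> bool" where
  "time_warp f \<longleftrightarrow> (\<forall>A. f (Sup A) = Sup (f ` A))"

definition pw :: "enat \<Rightarrow> enat" where
  "pw m = Sup {enat k | k. enat k < m}"

definition star :: "(enat \<Rightarrow> enat) \<Rightarrow> (enat \<Rightarrow> enat)" where
  "star f = (GREATEST h. time_warp h \<and> f \<circ> h \<le> pw)"

end

theory Submission
  imports Defs
begin

(* Write u m = Inf {n. m <= f n} for the generalised inverse of f, so that the claimed formula
   is p (u m): p is monotone and infima in omega^+ are attained. Because those infima are
   attained, u is lower adjoint to f on the values where it is finite, hence preserves joins,
   and p o u is a time warp. It satisfies f o p o u <= p because p (u m) is the join of the
   finite k < u m, all of which f sends below m. Conversely, if f o h <= p and m is finite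
   and positive, then u m <= h m would give m <= f (u m) <= f (h m) <= p m < m; the case
   m = omega follows because h preserves joins. *)

lemma wellorder_mono_Inf_eq:
  fixes f :: "'a::{wellorder,complete_lattice} \<Rightarrow> 'b::complete_lattice"
  assumes "mono f" and "f top = top"
  shows "f (Inf A) = (INF x\<in>A. f x)"
proof (cases "A = {}")
  case False
  then obtain a where "a \<in> A" by blast
  then have "Inf A \<in> A" by (rule wellorder_InfI)
  then show ?thesis using mono_Inf[OF assms(1)] by (auto intro: antisym INF_lower)
qed (use assms(2) in simp)

lemma Sup_range_enat: "Sup (range enat) = \<infinity>"
  unfolding Sup_enat_def by (auto dest: finite_imageD simp: inj_on_def)

lemma time_warp_mono: "time_warp f \<Longrightarrow> mono f"
proof (rule monoI)
  fix x y :: enat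
  assume "time_warp f" and "x \<le> y"
  then have "f (sup x y) = sup (f x) (f y)"
    unfolding time_warp_def by (metis Sup_insert Sup_empty image_empty image_insert sup_bot_right)
  with \<open>x \<le> y\<close> have "f y = sup (f x) (f y)" by (simp add: sup_absorb2)
  then show "f x \<le> f y" by (simp add: le_iff_sup)
qed

lemma time_warp_zero: "time_warp f \<Longrightarrow> f 0 = 0"
  unfolding time_warp_def by (drule spec[of _ "{}"]) (simp add: bot_enat_def)

lemma time_warp_infinity: "time_warp f \<Longrightarrow> f \<infinity> = (SUP k. f (enat k))"
  unfolding time_warp_def by (drule spec[of _ "range enat"]) (simp add: Sup_range_enat image_image)

lemma time_warp_comp: "time_warp f \<Longrightarrow> time_warp g \<Longrightarrow> time_warp (f \<circ> g)"
  by (simp add: time_warp_def image_comp)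

lemma less_imp_le_pw: "x < m \<Longrightarrow> x \<le> pw m"
  unfolding pw_def by (cases x) (auto intro: Sup_upper)

lemma pw_infinity [simp]: "pw \<infinity> = \<infinity>"
  by (simp add: pw_def full_SetCompr_eq Sup_range_enat)

lemma pw_less:
  assumes "0 < m" and "m < \<infinity>"
  shows "pw m < m"
proof -
  obtain j where m: "m = enat j" and "0 < j"
    using assms by (cases m) (auto simp: zero_enat_def)
  then have "{enat k | k. enat k < m} = enat ` {..<j}" by auto
  moreover have "enat ` {..<j} \<noteq> {}" using \<open>0 < j\<close> by auto
  ultimately have "pw m \<in> {enat k | k. enat k < m}"
    unfolding pw_def Sup_enat_def by (metis Max_in finite_imageI finite_lessThan)
  then show ?thesis by auto
qed

lemma time_warp_pw: "time_warp pw"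
  unfolding time_warp_def
proof
  fix A :: "enat set"
  have "{enat k | k. enat k < Sup A} = (\<Union>a\<in>A. {enat k | k. enat k < a})"
    by (auto simp: less_Sup_iff)
  then show "pw (Sup A) = Sup (pw ` A)"
    using SUP_UNION[of "\<lambda>x. x"] by (simp add: pw_def)
qed

definition gen_inv :: "(enat \<Rightarrow> enat) \<Rightarrow> enat \<Rightarrow> enat" where
  "gen_inv f m = Inf {n. m \<le> f n}"

lemma gen_inv_le: "m \<le> f n \<Longrightarrow> gen_inv f m \<le> n"
  unfolding gen_inv_def by (simp add: Inf_lower)

lemma less_gen_inv_imp_less: "n < gen_inv f m \<Longrightarrow> f n < m"
  using gen_inv_le[of m f n] by (meson not_le)

lemma le_apply_gen_inv:
  assumes "gen_inv f m \<noteq> \<infinity>"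
  shows "m \<le> f (gen_inv f m)"
proof -
  have "{n. m \<le> f n} \<noteq> {}"
    using assms by (metis Inf_empty gen_inv_def top_enat_def)
  then have "gen_inv f m \<in> {n. m \<le> f n}"
    unfolding gen_inv_def by (meson ex_in_conv wellorder_InfI)
  then show ?thesis by simp
qed

lemma mono_gen_inv: "mono (gen_inv f)"
  unfolding gen_inv_def by (rule monoI, rule Inf_superset_mono) (auto intro: order_trans)

lemma time_warp_gen_inv:
  assumes "mono f"
  shows "time_warp (gen_inv f)"
  unfolding time_warp_def
proof
  fix A :: "enat set"
  let ?s = "Sup (gen_inv f ` A)"
  have "gen_inv f (Sup A) \<le> ?s"
  proof (cases "?s = \<infinity>")
    case False
    have "a \<le> f ?s" if "a \<in> A" for a
    proof -
      have "gen_inv f a \<le> ?s" using that by (rule SUP_upper)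
      with False have "gen_inv f a \<noteq> \<infinity>" by (cases "gen_inv f a") auto
      then have "a \<le> f (gen_inv f a)" by (rule le_apply_gen_inv)
      also have "\<dots> \<le> f ?s" using \<open>gen_inv f a \<le> ?s\<close> by (rule monoD[OF assms])
      finally show ?thesis .
    qed
    then have "Sup A \<le> f ?s" by (rule Sup_least)
    then show ?thesis by (rule gen_inv_le)
  qed simp
  moreover have "?s \<le> gen_inv f (Sup A)"
    by (rule SUP_least, rule monoD[OF mono_gen_inv], rule Sup_upper)
  ultimately show "gen_inv f (Sup A) = ?s" by (rule antisym)
qed

lemma apply_pw_gen_inv_le:
  assumes "time_warp f"
  shows "f (pw (gen_inv f m)) \<le> pw m"
proof -
  have "f (pw (gen_inv f m)) = (SUP x\<in>{enat k | k. enat k < gen_inv f m}. f x)"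
    using assms unfolding time_warp_def pw_def by blast
  also have "\<dots> \<le> pw m"
  proof (rule SUP_least)
    fix x assume "x \<in> {enat k | k. enat k < gen_inv f m}"
    then have "f x < m" by (auto intro: less_gen_inv_imp_less)
    then show "f x \<le> pw m" by (rule less_imp_le_pw)
  qed
  finally show ?thesis .
qed

lemma le_pw_gen_inv:
  assumes f: "time_warp f" and h: "time_warp h" and below: "f \<circ> h \<le> pw"
  shows "h m \<le> pw (gen_inv f m)"
proof -
  have finite_case: "h m \<le> pw (gen_inv f m)" if "m < \<infinity>" for m
  proof (cases "h m < gen_inv f m \<or> gen_inv f m = \<infinity>")
    case True
    then show ?thesis by (auto intro: less_imp_le_pw)
  next
    case False
    then have "m \<le> f (gen_inv f m)" by (simp add: le_apply_gen_inv)
    also have "\<dots> \<le> f (h m)" using False by (auto simp: not_less intro: monoD[OF time_warp_mono[OF f]])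
    also have "\<dots> \<le> pw m" using below by (simp add: le_fun_def)
    finally have "m = 0" using pw_less \<open>m < \<infinity>\<close> by (metis not_gr_zero not_le)
    then show ?thesis using time_warp_zero[OF h] by simp
  qed
  show ?thesis
  proof (cases "m = \<infinity>")
    case True
    have "h m = (SUP k. h (enat k))" using time_warp_infinity[OF h] True by simp
    also have "\<dots> \<le> pw (gen_inv f m)"
    proof (rule SUP_least)
      fix k
      have "h (enat k) \<le> pw (gen_inv f (enat k))" by (rule finite_case) simp
      also have "\<dots> \<le> pw (gen_inv f m)"
        using time_warp_mono[OF time_warp_pw] mono_gen_inv True by (simp add: monoD)
      finally show "h (enat k) \<le> pw (gen_inv f m)" .
    qed
    finally show ?thesis .
  qed (simp add: finite_case)
qed

lemma star_eq_pw_comp_gen_inv: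
  assumes "time_warp f"
  shows "star f = pw \<circ> gen_inv f"
  unfolding star_def
proof (rule Greatest_equality)
  show "time_warp (pw \<circ> gen_inv f) \<and> f \<circ> (pw \<circ> gen_inv f) \<le> pw"
    using time_warp_comp[OF time_warp_pw time_warp_gen_inv[OF time_warp_mono[OF assms]]]
      apply_pw_gen_inv_le[OF assms] by (simp add: le_fun_def)
next
  fix h assume "time_warp h \<and> f \<circ> h \<le> pw"
  then show "h \<le> pw \<circ> gen_inv f" using le_pw_gen_inv[OF assms] by (simp add: le_fun_def)
qed

theorem lemma2p3:
  fixes f :: "enat \<Rightarrow> enat" and m :: enat
  assumes "time_warp f"
  shows "star f m = Inf {pw n | n. m \<le> f n}"
proof -
  have "Inf {pw n | n. m \<le> f n} = pw (gen_inv f m)"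
    using wellorder_mono_Inf_eq[OF time_warp_mono[OF time_warp_pw], of "{n. m \<le> f n}"]
    by (simp add: gen_inv_def top_enat_def image_Collect)
  then show ?thesis using star_eq_pw_comp_gen_inv[OF assms] by simp
qed

end
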